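(* Let $r\in\mathbb Q_{\ge0}$, $N\ge 1$, $L\in\mathbb Z$ with $r=L/N$, $g=\gcd(L,N)$, $\ell=L/g$, $n=N/g$. Let $F$ be a $p$-adic field with residue field $\mathbb F_q$ of characteristic $p>n$. Let $P=\lambda^N+\alpha_1\lambda^{N-1}+\dots+\alpha_{ng}\in F[\lambda]$ have slope $r$ (all roots $\lambda_i\in\bar F$ satisfy $|\lambda_i|=q^{-r}$), with $N$ distinct roots $\lambda_1,\dots,\lambda_N$ satisfying $|\lambda_i-\lambda_j|=q^{-r}$ for all $i\ne j$. Let $R=\lambda^g+a_1\lambda^{g-1}+\dots+a_g\in\mathbb F_q[\lambda]$, $a_j=\operatorname{res}_{\ell j}(\alpha_{nj})$, be its $r$-reduction. Then the map $\lambda_j\mapsto t_r(\lambda_j)$ from the roots of $P$ to the roots of $R$ is an $n$-to-$1$ map onto the set of roots of $R$.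
   Context: $\varpi$ a uniformizer of $F$; $\operatorname{ord}$ the valuation on $\bar F$ with $\operatorname{ord}\varpi=1$; $|x|=q^{-\operatorname{ord}x}$. For $x\in\bar F$ with $\operatorname{ord}x\in\mathbb Z$, $\operatorname{ac}(x)=\operatorname{res}(x/\varpi^{\operatorname{ord}x})\in\bar{\mathbb F}_q$ ($\operatorname{ac}(0)=0$), where $\operatorname{res}$ is reduction of integers of $\bar F$ to $\bar{\mathbb F}_q$; $\operatorname{res}_i(x)=\operatorname{ac}(x)$ if $\operatorname{ord}x=i$, else $0$. For $\lambda\in\bar F$ with $\operatorname{ord}\lambda=r$, $t_r(\lambda)=\operatorname{ac}(\lambda^n/\varpi^\ell)\in\bar{\mathbb F}_q^\times$. *)

theory Defs
  imports "HOL-Computational_Algebra.Polynomial"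
begin

text \<open>
  Abstract rendering of the setting: the type 'a plays the role of an algebraic closure
  of the p-adic field F (given as the subset Fs of 'a), ord is the valuation on 'a
  (meaningful on nonzero elements only), vpi is the uniformizer, and
  res : O -> 'b is the reduction map from the valuation ring of 'a onto the residue
  field 'b (which is then an algebraic closure of F_q).
\<close>

definition val_integral :: "('a::field \<Rightarrow> rat) \<Rightarrow> 'a \<Rightarrow> bool" where
  "val_integral ord x \<longleftrightarrow> x = 0 \<or> ord x \<ge> 0"

definition val_cauchy :: "('a::field \<Rightarrow> rat) \<Rightarrow> (nat \<Rightarrow> 'a) \<Rightarrow> bool" where
  "val_cauchy ord s \<longleftrightarrow>
     (\<forall>M. \<exists>K. \<forall>i\<ge>K. \<forall>j\<ge>K. s i = s j \<or> ord (s i - s j) \<ge> M)"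

definition val_converges :: "('a::field \<Rightarrow> rat) \<Rightarrow> (nat \<Rightarrow> 'a) \<Rightarrow> 'a \<Rightarrow> bool" where
  "val_converges ord s y \<longleftrightarrow> (\<forall>M. \<exists>K. \<forall>i\<ge>K. s i = y \<or> ord (s i - y) \<ge> M)"

definition p_adic_closure_data ::
  "'a::field_char_0 set \<Rightarrow> ('a \<Rightarrow> rat) \<Rightarrow> ('a \<Rightarrow> 'b::field) \<Rightarrow> 'a \<Rightarrow> nat \<Rightarrow> nat \<Rightarrow> bool" where
  "p_adic_closure_data Fs ord res vpi p q \<longleftrightarrow>
     \<comment> \<open>Fs is a subfield\<close>
     0 \<in> Fs \<and> 1 \<in> Fs \<and>
     (\<forall>x\<in>Fs. \<forall>y\<in>Fs. x + y \<in> Fs \<and> x - y \<in> Fs \<and> x * y \<in> Fs) \<and>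
     (\<forall>x\<in>Fs. inverse x \<in> Fs) \<and>
     \<comment> \<open>'a is an algebraic closure of Fs\<close>
     (\<forall>P :: 'a poly. degree P > 0 \<longrightarrow> (\<exists>x. poly P x = 0)) \<and>
     (\<forall>x::'a. \<exists>Q. Q \<noteq> 0 \<and> (\<forall>i. coeff Q i \<in> Fs) \<and> poly Q x = 0) \<and>
     \<comment> \<open>ord is a (rank one) valuation on 'a, discrete on Fs with uniformizer vpi\<close>
     (\<forall>x y. x \<noteq> 0 \<longrightarrow> y \<noteq> 0 \<longrightarrow> ord (x * y) = ord x + ord y) \<and>
     (\<forall>x y. x \<noteq> 0 \<longrightarrow> y \<noteq> 0 \<longrightarrow> x + y \<noteq> 0 \<longrightarrow> ord (x + y) \<ge> min (ord x) (ord y)) \<and>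
     (\<forall>x\<in>Fs. x \<noteq> 0 \<longrightarrow> ord x \<in> \<int>) \<and>
     vpi \<in> Fs \<and> vpi \<noteq> 0 \<and> ord vpi = 1 \<and>
     \<comment> \<open>Fs is complete with respect to ord\<close>
     (\<forall>s. (\<forall>i. s i \<in> Fs) \<longrightarrow> val_cauchy ord s \<longrightarrow> (\<exists>y\<in>Fs. val_converges ord s y)) \<and>
     \<comment> \<open>res is the reduction map from the valuation ring onto the residue field 'b\<close>
     (\<forall>x y. val_integral ord x \<longrightarrow> val_integral ord y \<longrightarrow>
        res (x + y) = res x + res y \<and> res (x * y) = res x * res y) \<and>
     res 1 = 1 \<and>
     (\<forall>x. val_integral ord x \<longrightarrow> (res x = 0 \<longleftrightarrow> x = 0 \<or> ord x > 0)) \<and>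
     (\<forall>b. \<exists>x. val_integral ord x \<and> res x = b) \<and>
     \<comment> \<open>residue field of F is F_q, of characteristic p\<close>
     prime p \<and> of_nat p = (0::'b) \<and>
     finite (res ` {x\<in>Fs. val_integral ord x}) \<and> card (res ` {x\<in>Fs. val_integral ord x}) = q"

definition ac :: "('a::field \<Rightarrow> rat) \<Rightarrow> ('a \<Rightarrow> 'b::field) \<Rightarrow> 'a \<Rightarrow> 'a \<Rightarrow> 'b" where
  "ac ord res vpi x = (if x = 0 then 0 else res (x / vpi powi \<lfloor>ord x\<rfloor>))"

definition res_idx :: "('a::field \<Rightarrow> rat) \<Rightarrow> ('a \<Rightarrow> 'b::field) \<Rightarrow> 'a \<Rightarrow> int \<Rightarrow> 'a \<Rightarrow> 'b" where
  "res_idx ord res vpi i x = (if x \<noteq> 0 \<and> ord x = of_int i then ac ord res vpi x else 0)"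

definition t_r :: "('a::field \<Rightarrow> rat) \<Rightarrow> ('a \<Rightarrow> 'b::field) \<Rightarrow> 'a \<Rightarrow> nat \<Rightarrow> int \<Rightarrow> 'a \<Rightarrow> 'b" where
  "t_r ord res vpi n l x = ac ord res vpi (x ^ n / vpi powi l)"

text \<open>r-reduction of P = lambda^N + alpha_1 lambda^(N-1) + ... + alpha_(ng), N = n g:
  R = lambda^g + a_1 lambda^(g-1) + ... + a_g with a_j = res_(l j)(alpha_(n j)).
  Here alpha_k = coeff P (N - k).\<close>
definition r_reduction ::
  "('a::field \<Rightarrow> rat) \<Rightarrow> ('a \<Rightarrow> 'b::field) \<Rightarrow> 'a \<Rightarrow> nat \<Rightarrow> int \<Rightarrow> nat \<Rightarrow> 'a poly \<Rightarrow> 'b poly" where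
  "r_reduction ord res vpi n l g P =
     monom 1 g + (\<Sum>j\<in>{1..g}. monom (res_idx ord res vpi (l * int j) (coeff P (n * g - n * j))) (g - j))"

end

theory Submission
  imports Defs
begin

text \<open>
  Pick \<open>\<pi>\<close> with \<open>\<pi> ^ n = vpi ^ l\<close>, so that \<open>ord \<pi> = r\<close> and every root \<open>\<lambda>\<close> of \<open>P\<close> is
  \<open>\<pi> * u\<close> with \<open>u\<close> a unit; then \<open>t_r \<lambda> = res u ^ n\<close>. The rescaled polynomial
  \<open>\<pi> ^ (-N) * P (\<pi> * X) = \<Prod>(X - u)\<close> has integral coefficients \<open>\<alpha>\<^sub>k / \<pi> ^ k\<close>. Such a
  coefficient has valuation \<open>ord \<alpha>\<^sub>k - k * l / n\<close>, which can only vanish when \<open>n\<close> divides \<open>k\<close>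
  because \<open>l\<close> and \<open>n\<close> are coprime; so its residue is \<open>0\<close> unless \<open>k = n * j\<close>, in which
  case it is \<open>res_(l j) (\<alpha>\<^sub>(n j))\<close>. Hence \<open>\<Prod>(X - res u) = R (X ^ n)\<close>.

  The separation hypothesis makes the \<open>N = n * g\<close> residues \<open>res u\<close> pairwise distinct. Their
  \<open>n\<close>-th powers lie among the at most \<open>g\<close> roots of \<open>R\<close>, and each fibre has at most \<open>n\<close>
  elements (they are roots of \<open>X ^ n - y\<close>), so every root of \<open>R\<close> is hit exactly \<open>n\<close> times.
\<close>

lemma coeff_prod_linear_factors_card:
  "coeff (\<Prod>x\<in>Z. [:- x, 1::'a::idom:]) (card Z) = 1"
proof -
  have "degree (\<Prod>x\<in>Z. [:- x, 1::'a:]) = card Z"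
    by (simp add: degree_prod_sum_eq)
  moreover have "lead_coeff (\<Prod>x\<in>Z. [:- x, 1::'a:]) = 1"
    by (subst lead_coeff_prod) simp
  ultimately show ?thesis
    by simp
qed

lemma monic_poly_eq_prod_roots:
  fixes P :: "'a::idom poly"
  assumes "finite Z" and "degree P = card Z" and "lead_coeff P = 1"
    and "\<And>x. x \<in> Z \<Longrightarrow> poly P x = 0"
  shows "P = (\<Prod>x\<in>Z. [:- x, 1:])"
proof (rule poly_eqI_degree_lead_coeff[where n = "card Z" and A = Z])
  show "coeff P (card Z) = coeff (\<Prod>x\<in>Z. [:- x, 1:]) (card Z)"
    using assms(2,3) by (simp add: coeff_prod_linear_factors_card)
  show "poly P z = poly (\<Prod>x\<in>Z. [:- x, 1:]) z" if "z \<in> Z" for z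
    using assms(1,4) that by (simp add: poly_prod prod_zero_iff)
qed (use assms(2) in \<open>simp_all add: degree_prod_sum_eq\<close>)

lemma coeff_prod_rescaled_linear_factors:
  fixes \<pi> :: "'a::field"
  assumes "finite Z" and "\<pi> \<noteq> 0" and "m \<le> card Z"
  shows "coeff (\<Prod>x\<in>Z. [:- (x / \<pi>), 1:]) m = coeff (\<Prod>x\<in>Z. [:- x, 1:]) m / \<pi> ^ (card Z - m)"
proof -
  have "pcompose (\<Prod>x\<in>Z. [:- x, 1:]) [:0, \<pi>:] = (\<Prod>x\<in>Z. smult \<pi> [:- (x / \<pi>), 1:])"
    unfolding pcompose_prod using assms(2) by (intro prod.cong) (simp_all add: pcompose_pCons)
  also have "\<dots> = smult (\<pi> ^ card Z) (\<Prod>x\<in>Z. [:- (x / \<pi>), 1:])"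
    by (simp only: prod_smult prod_constant)
  finally have "coeff (pcompose (\<Prod>x\<in>Z. [:- x, 1:]) [:0, \<pi>:]) m
      = coeff (smult (\<pi> ^ card Z) (\<Prod>x\<in>Z. [:- (x / \<pi>), 1:])) m"
    by (rule arg_cong)
  then have "\<pi> ^ m * coeff (\<Prod>x\<in>Z. [:- x, 1:]) m = \<pi> ^ card Z * coeff (\<Prod>x\<in>Z. [:- (x / \<pi>), 1:]) m"
    by (simp only: coeff_pcompose_linear coeff_smult)
  also have "\<pi> ^ card Z = \<pi> ^ m * \<pi> ^ (card Z - m)"
    using assms(3) by (simp flip: power_add)
  finally have "coeff (\<Prod>x\<in>Z. [:- x, 1:]) m = \<pi> ^ (card Z - m) * coeff (\<Prod>x\<in>Z. [:- (x / \<pi>), 1:]) m"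
    using power_not_zero[OF assms(2), of m] by (simp only: mult.assoc mult_cancel_left simp_thms)
  then show ?thesis
    using assms(2) by simp
qed

lemma sum_dvd_diff_reindex:
  fixes n g :: nat
  assumes "n > 0"
  shows "(\<Sum>m\<le>n * g. if n dvd (n * g - m) then h m else 0) = (\<Sum>j\<le>g. h (n * g - n * j))"
proof -
  have "{m \<in> {..n * g}. n dvd (n * g - m)} = (\<lambda>j. n * g - n * j) ` {..g}"
  proof (intro equalityI subsetI)
    fix m assume "m \<in> {m \<in> {..n * g}. n dvd (n * g - m)}"
    then obtain j where j: "n * g - m = n * j" and "m \<le> n * g"
      by blast
    then have "n * j \<le> n * g"
      using diff_le_self[of "n * g" m] by linarith
    with assms have "j \<le> g"
      by simp
    with j \<open>m \<le> n * g\<close> show "m \<in> (\<lambda>j. n * g - n * j) ` {..g}"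
      by (auto intro!: image_eqI[of _ _ j])
  qed (auto simp flip: diff_mult_distrib2)
  moreover have "inj_on (\<lambda>j. n * g - n * j) {..g}"
    using assms by (auto simp: inj_on_def simp flip: diff_mult_distrib2)
  ultimately show ?thesis
    by (simp add: sum.inter_filter[symmetric] sum.reindex)
qed

lemma degree_monom_one_minus_const:
  fixes a :: "'a::comm_ring_1"
  assumes "n > 0"
  shows "degree (monom 1 n - [:a:]) = n"
proof -
  have "coeff (monom 1 n - [:a:]) n = 1"
    using assms by (cases n) simp_all
  moreover have "degree (monom 1 n - [:a:]) \<le> n"
    by (rule degree_diff_le) (auto simp: degree_monom_le)
  ultimately show ?thesis
    by (metis le_antisym le_degree one_neq_zero)
qed

lemma card_fibre_power_le:
  fixes f :: "'a \<Rightarrow> 'b::idom"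
  assumes "inj_on f A" and "n > 0"
  shows "card {x \<in> A. f x ^ n = y} \<le> n"
proof -
  define M where "M = monom 1 n - [:y:]"
  have "degree M = n"
    unfolding M_def using assms(2) by (rule degree_monom_one_minus_const)
  then have "M \<noteq> 0"
    using assms(2) by auto
  have "inj_on f {x \<in> A. f x ^ n = y}"
    using assms(1) by (rule inj_on_subset) auto
  then have "card {x \<in> A. f x ^ n = y} = card (f ` {x \<in> A. f x ^ n = y})"
    by (simp add: card_image)
  also have "\<dots> \<le> card {z. poly M z = 0}"
    using poly_roots_finite[OF \<open>M \<noteq> 0\<close>] by (intro card_mono) (auto simp: M_def poly_monom)
  also have "\<dots> \<le> n"
    using card_poly_roots_bound[OF \<open>M \<noteq> 0\<close>] \<open>degree M = n\<close> by simp
  finally show ?thesis .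
qed

lemma fibres_card_eq_if_total_card_eq:
  assumes "finite Z" and "finite T" and "f ` Z \<subseteq> T" and "card T \<le> g" and "card Z = n * g"
    and "n > 0" and fibre_le: "\<And>y. card {x \<in> Z. f x = y} \<le> n"
  shows "f ` Z = T" and "\<And>y. y \<in> T \<Longrightarrow> card {x \<in> Z. f x = y} = n"
proof -
  have sum_fibres: "card Z = (\<Sum>y\<in>f ` Z. card {x \<in> Z. f x = y})"
    using sum.image_gen[OF assms(1), of "\<lambda>_. 1::nat" f] by simp
  also have "\<dots> \<le> n * card (f ` Z)"
    using sum_bounded_above[of "f ` Z" _ n] fibre_le by (simp add: mult.commute)
  finally have "g \<le> card (f ` Z)"
    using assms(5,6) by simp
  moreover have "card (f ` Z) \<le> card T"
    using assms(2,3) by (rule card_mono)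
  ultimately have card_image: "card (f ` Z) = card T"
    using assms(4) by linarith
  then show image: "f ` Z = T"
    by (rule card_subset_eq[OF assms(2,3)])
  then have "(\<Sum>y\<in>T. card {x \<in> Z. f x = y}) = (\<Sum>y\<in>T. n)"
    using sum_fibres assms(4,5) card_image \<open>g \<le> card (f ` Z)\<close> by (simp add: mult.commute)
  then show "card {x \<in> Z. f x = y} = n" if "y \<in> T" for y
    using sum_mono_inv[of "\<lambda>y. card {x \<in> Z. f x = y}" T "\<lambda>_. n" y] fibre_le that assms(2)
    by blast
qed

lemma power_image_eq_poly_roots:
  fixes f :: "'a \<Rightarrow> 'b::field"
  assumes "finite Z" and "card Z = n * g" and "n > 0" and "inj_on f Z"
    and prod_eq: "\<And>z. (\<Prod>x\<in>Z. z - f x) = poly R (z ^ n)"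
    and "R \<noteq> 0" and "degree R \<le> g"
  shows "(\<lambda>x. f x ^ n) ` Z = {y. poly R y = 0}"
    and "\<And>y. poly R y = 0 \<Longrightarrow> card {x \<in> Z. f x ^ n = y} = n"
proof -
  have "poly R (f x ^ n) = 0" if "x \<in> Z" for x
    using prod_eq[of "f x", symmetric] assms(1) that by (auto simp: prod_zero_iff)
  then have "(\<lambda>x. f x ^ n) ` Z \<subseteq> {y. poly R y = 0}"
    by blast
  moreover have "card {y. poly R y = 0} \<le> g"
    using card_poly_roots_bound[OF \<open>R \<noteq> 0\<close>] \<open>degree R \<le> g\<close> by linarith
  moreover note fibres = fibres_card_eq_if_total_card_eq[OF assms(1) poly_roots_finite[OF \<open>R \<noteq> 0\<close>]
      calculation assms(2,3) card_fibre_power_le[OF assms(4,3)]]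
  show "(\<lambda>x. f x ^ n) ` Z = {y. poly R y = 0}"
    by (rule fibres(1))
  show "card {x \<in> Z. f x ^ n = y} = n" if "poly R y = 0" for y
    using fibres(2)[of y] that by simp
qed

lemma coeff_r_reduction:
  "coeff (r_reduction ord res vpi n l g P) i =
     (if i = g then 1 else 0) +
     (\<Sum>j\<in>{1..g}. if g - j = i then res_idx ord res vpi (l * int j) (coeff P (n * g - n * j)) else 0)"
  by (simp add: r_reduction_def coeff_sum)

lemma r_reduction_monic:
  shows "degree (r_reduction ord res vpi n l g P) = g" and "lead_coeff (r_reduction ord res vpi n l g P) = 1"
proof -
  have "coeff (r_reduction ord res vpi n l g P) g = 1"
    by (auto simp: coeff_r_reduction intro!: sum.neutral)
  moreover have "degree (r_reduction ord res vpi n l g P) \<le> g"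
    by (rule degree_le) (auto simp: coeff_r_reduction intro: sum.neutral)
  ultimately show "degree (r_reduction ord res vpi n l g P) = g"
    by (metis le_antisym le_degree one_neq_zero)
  with \<open>coeff _ g = 1\<close> show "lead_coeff (r_reduction ord res vpi n l g P) = 1"
    by simp
qed

lemma reduced_fraction:
  assumes g: "int g = gcd L (int N)" and l: "l * int g = L" and n: "n * g = N"
    and "N \<ge> 1" and "0 \<le> (of_int L / of_nat N :: rat)"
  obtains k where "l = int k" and "coprime (int k) (int n)"
    and "of_int L / of_nat N = (of_nat k / of_nat n :: rat)"
proof -
  have "g > 0"
    using n \<open>N \<ge> 1\<close> by (cases g) auto
  have "L \<ge> 0"
    using assms(5) \<open>N \<ge> 1\<close> by (simp add: zero_le_divide_iff)
  then have "0 \<le> l * int g"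
    using l by simp
  then have "l \<ge> 0"
    using \<open>g > 0\<close> by (simp add: zero_le_mult_iff)
  have "L div int g = l" "int N div int g = int n"
    using \<open>g > 0\<close> by (simp_all flip: l n)
  then have "coprime l (int n)"
    using div_gcd_coprime[of L "int N"] \<open>N \<ge> 1\<close> by (simp flip: g)
  moreover have "(of_int L / of_nat N :: rat) = of_int l / of_nat n"
    using \<open>g > 0\<close> by (simp flip: l n)
  ultimately show ?thesis
    using that[of "nat l"] \<open>l \<ge> 0\<close> by simp
qed

lemma alg_closed_nth_root:
  fixes a :: "'a::field"
  assumes "\<forall>P::'a poly. 0 < degree P \<longrightarrow> (\<exists>x. poly P x = 0)" and "n > 0"
  obtains x where "x ^ n = a"
proof -
  have "degree (monom 1 n - [:a:]) = n"
    using assms(2) by (rule degree_monom_one_minus_const)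
  then obtain x where "poly (monom 1 n - [:a:]) x = 0"
    using assms by (metis (no_types))
  then show ?thesis
    using that by (simp add: poly_monom)
qed

lemma dvd_of_int_eq_mult_fraction:
  assumes "coprime (int l) (int n)" and "n > 0"
    and "(of_int b :: rat) = of_nat k * (of_nat l / of_nat n)"
  shows "n dvd k"
proof -
  have "of_int (b * int n) = (of_int (int k * int l) :: rat)"
    using assms(2,3) by (simp add: field_simps)
  then have "int n dvd int k * int l"
    by (metis dvd_triv_right of_int_eq_iff)
  then show ?thesis
    using assms(1) by (simp add: coprime_commute coprime_dvd_mult_left_iff)
qed

locale residue_valuation =
  fixes ord :: "'a::field \<Rightarrow> rat" and res :: "'a \<Rightarrow> 'b::field" and vpi :: 'a
  assumes ord_mult: "x \<noteq> 0 \<Longrightarrow> y \<noteq> 0 \<Longrightarrow> ord (x * y) = ord x + ord y"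
    and ord_add: "x \<noteq> 0 \<Longrightarrow> y \<noteq> 0 \<Longrightarrow> x + y \<noteq> 0 \<Longrightarrow> min (ord x) (ord y) \<le> ord (x + y)"
    and vpi_nonzero: "vpi \<noteq> 0" and ord_vpi: "ord vpi = 1"
    and res_add: "val_integral ord x \<Longrightarrow> val_integral ord y \<Longrightarrow> res (x + y) = res x + res y"
    and res_mult: "val_integral ord x \<Longrightarrow> val_integral ord y \<Longrightarrow> res (x * y) = res x * res y"
    and res_one: "res 1 = 1"
    and res_eq_0_iff: "val_integral ord x \<Longrightarrow> res x = 0 \<longleftrightarrow> x = 0 \<or> 0 < ord x"
begin

lemma ord_one: "ord 1 = 0"
  using ord_mult[of 1 1] by simp

lemma ord_power: "x \<noteq> 0 \<Longrightarrow> ord (x ^ k) = of_nat k * ord x"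
  by (induction k) (auto simp: ord_one ord_mult algebra_simps)

lemma ord_divide: "x \<noteq> 0 \<Longrightarrow> y \<noteq> 0 \<Longrightarrow> ord (x / y) = ord x - ord y"
  using ord_mult[of "x / y" y] by simp

lemma ord_minus: "ord (- x) = ord x"
proof (cases "x = 0")
  case False
  have "ord ((-1) * (-1)) = ord (-1) + ord (-1::'a)"
    by (rule ord_mult) auto
  then have "ord (-1::'a) = 0"
    by (simp add: ord_one)
  moreover have "ord ((-1) * x) = ord (-1) + ord x"
    using False by (intro ord_mult) auto
  ultimately show ?thesis
    by simp
qed simp

lemma val_integral_0 [simp]: "val_integral ord 0"
  and val_integral_1 [simp]: "val_integral ord 1"
  by (auto simp: val_integral_def ord_one)

lemma val_integral_add: "val_integral ord x \<Longrightarrow> val_integral ord y \<Longrightarrow> val_integral ord (x + y)"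
  using ord_add[of x y] unfolding val_integral_def
  by (cases "x = 0"; cases "y = 0"; cases "x + y = 0") force+

lemma val_integral_mult: "val_integral ord x \<Longrightarrow> val_integral ord y \<Longrightarrow> val_integral ord (x * y)"
  using ord_mult[of x y] unfolding val_integral_def by (cases "x = 0"; cases "y = 0") auto

lemma val_integral_minus: "val_integral ord x \<Longrightarrow> val_integral ord (- x)"
  by (simp add: val_integral_def ord_minus)

lemma val_integral_power: "val_integral ord x \<Longrightarrow> val_integral ord (x ^ k)"
  by (induction k) (auto intro: val_integral_mult)

lemma val_integral_of_ord_eq_0: "ord x = 0 \<Longrightarrow> val_integral ord x"
  by (simp add: val_integral_def)

lemma res_0 [simp]: "res 0 = 0"
  using res_eq_0_iff[of 0] by simp

lemma res_minus: "val_integral ord x \<Longrightarrow> res (- x) = - res x"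
  using res_add[of x "- x"] by (simp add: val_integral_minus eq_neg_iff_add_eq_0 add.commute)

lemma res_diff: "val_integral ord x \<Longrightarrow> val_integral ord y \<Longrightarrow> res (x - y) = res x - res y"
  using res_add[of x "- y"] by (simp add: val_integral_minus res_minus)

lemma res_power: "val_integral ord x \<Longrightarrow> res (x ^ k) = res x ^ k"
  by (induction k) (auto simp: res_one res_mult val_integral_power)

lemma res_eq_0_of_ord_ne_0: "val_integral ord x \<Longrightarrow> ord x \<noteq> 0 \<Longrightarrow> res x = 0"
  using res_eq_0_iff[of x] by (auto simp: val_integral_def)

lemma res_ne_0_of_ord_eq_0: "x \<noteq> 0 \<Longrightarrow> ord x = 0 \<Longrightarrow> res x \<noteq> 0"
  using res_eq_0_iff[of x] by (simp add: val_integral_of_ord_eq_0)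

lemma res_idx_0_1: "res_idx ord res vpi 0 1 = 1"
  by (simp add: res_idx_def ac_def ord_one res_one)

lemma res_divide_vpi_power:
  assumes "val_integral ord (a / vpi ^ m)"
  shows "res (a / vpi ^ m) = res_idx ord res vpi (int m) a"
proof (cases "a = 0")
  case False
  have ord_quot: "ord (a / vpi ^ m) = ord a - of_nat m"
    using False vpi_nonzero by (simp add: ord_divide ord_power ord_vpi)
  show ?thesis
  proof (cases "ord a = of_nat m")
    case True
    then show ?thesis
      using False by (simp add: res_idx_def ac_def power_int_of_nat)
  next
    case False
    then show ?thesis
      using assms ord_quot by (simp add: res_idx_def res_eq_0_of_ord_ne_0)
  qed
qed (simp add: res_idx_def)


lemma ord_vpi_power_root:
  assumes "\<pi> ^ n = vpi ^ l" and "n > 0"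
  shows "\<pi> \<noteq> 0" and "ord \<pi> = of_nat l / of_nat n"
proof -
  show "\<pi> \<noteq> 0"
    using assms vpi_nonzero by (metis power_0_left power_not_zero gr_implies_not0)
  then show "ord \<pi> = of_nat l / of_nat n"
    using arg_cong[OF assms(1), of ord] assms(2) vpi_nonzero
    by (simp add: ord_power ord_vpi field_simps)
qed

lemma res_divide_root_power:
  assumes root: "\<pi> ^ n = vpi ^ l" and "n > 0" and coprime: "coprime (int l) (int n)"
    and a_ord: "a = 0 \<or> ord a \<in> \<int>" and integral: "val_integral ord (a / \<pi> ^ k)"
  shows "res (a / \<pi> ^ k) = (if n dvd k then res_idx ord res vpi (int (l * (k div n))) a else 0)"
proof (cases "n dvd k")
  case True
  then obtain j where "k = n * j"
    by blast
  moreover have "\<pi> ^ (n * j) = vpi ^ (l * j)"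
    by (simp add: power_mult root)
  ultimately show ?thesis
    using integral \<open>n > 0\<close> by (simp add: res_divide_vpi_power)
next
  case False
  note \<pi> = ord_vpi_power_root[OF root \<open>n > 0\<close>]
  have "res (a / \<pi> ^ k) = 0"
  proof (cases "a = 0")
    case False
    then obtain b where b: "ord a = of_int b"
      using a_ord by (auto elim: Ints_cases)
    have "ord (a / \<pi> ^ k) \<noteq> 0"
    proof
      assume "ord (a / \<pi> ^ k) = 0"
      then have "(of_int b :: rat) = of_nat k * (of_nat l / of_nat n)"
        using False \<pi> b by (simp add: ord_divide ord_power)
      then show False
        using dvd_of_int_eq_mult_fraction[OF coprime \<open>n > 0\<close>] \<open>\<not> n dvd k\<close> by blast
    qed
    with integral show ?thesis
      by (rule res_eq_0_of_ord_ne_0)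
  qed simp
  then show ?thesis
    using False by simp
qed

lemma t_r_mult_unit:
  assumes root: "\<pi> ^ n = vpi ^ l" and "u \<noteq> 0" and "ord u = 0"
  shows "t_r ord res vpi n (int l) (\<pi> * u) = res u ^ n"
proof -
  have "(\<pi> * u) ^ n / vpi powi int l = u ^ n"
    using vpi_nonzero by (simp add: power_mult_distrib root)
  moreover have "u ^ n \<noteq> 0" "ord (u ^ n) = 0"
    using assms by (simp_all add: ord_power)
  ultimately show ?thesis
    using assms by (simp add: t_r_def ac_def res_power val_integral_of_ord_eq_0)
qed

lemma res_coeff_prod_linear_factors:
  assumes "finite A" and "\<And>a. a \<in> A \<Longrightarrow> val_integral ord (u a)"
  shows "val_integral ord (coeff (\<Prod>a\<in>A. [:- u a, 1:]) i) \<and>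
         res (coeff (\<Prod>a\<in>A. [:- u a, 1:]) i) = coeff (\<Prod>a\<in>A. [:- res (u a), 1:]) i"
  using assms
proof (induction A arbitrary: i rule: finite_induct)
  case (insert a A)
  define Q where "Q = (\<Prod>a\<in>A. [:- u a, 1:])"
  define Q' where "Q' = (\<Prod>a\<in>A. [:- res (u a), 1:])"
  define c where "c = coeff Q (i - 1)"
  have IH: "val_integral ord (coeff Q j) \<and> res (coeff Q j) = coeff Q' j" for j
    using insert by (simp add: Q_def Q'_def)
  have ua: "val_integral ord (u a)"
    using insert by simp
  have "coeff (\<Prod>a\<in>insert a A. [:- u a, 1:]) i = - u a * coeff Q i + (if i = 0 then 0 else c)"
    and "coeff (\<Prod>a\<in>insert a A. [:- res (u a), 1:]) i
           = - res (u a) * coeff Q' i + (if i = 0 then 0 else coeff Q' (i - 1))"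
    using insert(1,2) by (simp_all add: Q_def Q'_def c_def coeff_pCons')
  then show ?case
    using IH[of i] IH[of "i - 1"] ua
    by (simp add: c_def val_integral_add val_integral_mult val_integral_minus res_add res_mult
        res_minus del: mult_minus_left)
qed (simp add: res_one)

lemma poly_r_reduction_eq_sum:
  assumes "coeff P (n * g) = 1"
  shows "poly (r_reduction ord res vpi n l g P) y =
           (\<Sum>j\<le>g. res_idx ord res vpi (l * int j) (coeff P (n * g - n * j)) * y ^ (g - j))"
proof -
  have "{..g} = insert 0 {1..g}"
    by auto
  then show ?thesis
    using assms by (simp add: r_reduction_def poly_sum poly_monom res_idx_0_1)
qed

lemma inj_on_res_divide:
  assumes "\<pi> \<noteq> 0" and "\<And>x. x \<in> Z \<Longrightarrow> x \<noteq> 0 \<and> ord x = ord \<pi>"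
    and "\<And>x y. x \<in> Z \<Longrightarrow> y \<in> Z \<Longrightarrow> x \<noteq> y \<Longrightarrow> ord (x - y) = ord \<pi>"
  shows "inj_on (\<lambda>x. res (x / \<pi>)) Z"
proof (rule inj_onI, rule ccontr)
  fix x y
  assume "x \<in> Z" "y \<in> Z" "x \<noteq> y"
  then have "x / \<pi> \<noteq> 0" "ord (x / \<pi>) = 0" "y / \<pi> \<noteq> 0" "ord (y / \<pi>) = 0"
    and "x / \<pi> - y / \<pi> \<noteq> 0" "ord (x / \<pi> - y / \<pi>) = 0"
    using assms by (auto simp: ord_divide simp flip: diff_divide_distrib)
  then have "res (x / \<pi>) - res (y / \<pi>) \<noteq> 0"
    by (simp add: res_ne_0_of_ord_eq_0 flip: res_diff[OF val_integral_of_ord_eq_0 val_integral_of_ord_eq_0])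
  moreover assume "res (x / \<pi>) = res (y / \<pi>)"
  ultimately show False
    by simp
qed

lemma prod_res_roots_eq_r_reduction:
  assumes "finite Z" and card: "card Z = n * g" and "n > 0"
    and root: "\<pi> ^ n = vpi ^ l" and coprime: "coprime (int l) (int n)"
    and integral: "\<And>x. x \<in> Z \<Longrightarrow> val_integral ord (x / \<pi>)"
    and coeff_ord: "\<And>i. coeff P i = 0 \<or> ord (coeff P i) \<in> \<int>"
    and P: "P = (\<Prod>x\<in>Z. [:- x, 1:])"
  shows "(\<Prod>x\<in>Z. z - res (x / \<pi>)) = poly (r_reduction ord res vpi n (int l) g P) (z ^ n)"
proof -
  define N where "N = n * g"
  define P' where "P' = (\<Prod>x\<in>Z. [:- res (x / \<pi>), 1:])"
  define B where "B j = res_idx ord res vpi (int l * int j) (coeff P (N - n * j))" for j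
  have "\<pi> \<noteq> 0"
    using ord_vpi_power_root[OF root \<open>n > 0\<close>] by simp
  have coeff_P': "coeff P' m = (if n dvd (N - m) then B ((N - m) div n) else 0)" if "m \<le> N" for m
  proof -
    have "coeff (\<Prod>x\<in>Z. [:- (x / \<pi>), 1:]) m = coeff P m / \<pi> ^ (N - m)"
      using coeff_prod_rescaled_linear_factors[OF \<open>finite Z\<close> \<open>\<pi> \<noteq> 0\<close>] that card P N_def by simp
    then have "coeff P' m = res (coeff P m / \<pi> ^ (N - m))"
      and "val_integral ord (coeff P m / \<pi> ^ (N - m))"
      using res_coeff_prod_linear_factors[of Z "\<lambda>x. x / \<pi>" m] \<open>finite Z\<close> integral
      by (simp_all add: P'_def)
    with res_divide_root_power[OF root \<open>n > 0\<close> coprime coeff_ord] show ?thesis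
      using that by (auto simp: B_def)
  qed
  have "degree P' = N"
    using card by (simp add: P'_def N_def degree_prod_sum_eq)
  have "(\<Prod>x\<in>Z. z - res (x / \<pi>)) = poly P' z"
    by (simp add: P'_def poly_prod)
  also have "\<dots> = (\<Sum>m\<le>N. coeff P' m * z ^ m)"
    using poly_altdef[of P' z] \<open>degree P' = N\<close> by simp
  also have "\<dots> = (\<Sum>m\<le>N. if n dvd (N - m) then B ((N - m) div n) * z ^ m else 0)"
    by (intro sum.cong) (simp_all add: coeff_P')
  also have "\<dots> = (\<Sum>j\<le>g. B ((N - (N - n * j)) div n) * z ^ (N - n * j))"
    unfolding N_def by (rule sum_dvd_diff_reindex[OF \<open>n > 0\<close>])
  also have "\<dots> = (\<Sum>j\<le>g. B j * (z ^ n) ^ (g - j))"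
    using \<open>n > 0\<close> by (intro sum.cong) (simp_all add: N_def diff_mult_distrib2 flip: power_mult)
  also have "\<dots> = poly (r_reduction ord res vpi n (int l) g P) (z ^ n)"
    using poly_r_reduction_eq_sum[of P n g "int l" "z ^ n"] coeff_prod_linear_factors_card[of Z]
    by (simp add: P card N_def B_def)
  finally show ?thesis .
qed


lemma t_r_maps_roots_onto_r_reduction_roots:
  assumes "finite Z" and card: "card Z = n * g" and "n > 0" and coprime: "coprime (int k) (int n)"
    and root: "\<pi> ^ n = vpi ^ k"
    and P: "P = (\<Prod>x\<in>Z. [:- x, 1:])" and coeff_ord: "\<And>i. coeff P i = 0 \<or> ord (coeff P i) \<in> \<int>"
    and slope: "\<And>x. x \<in> Z \<Longrightarrow> x \<noteq> 0 \<and> ord x = of_nat k / of_nat n"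
    and sep: "\<And>x y. x \<in> Z \<Longrightarrow> y \<in> Z \<Longrightarrow> x \<noteq> y \<Longrightarrow> ord (x - y) = of_nat k / of_nat n"
  shows "t_r ord res vpi n (int k) ` Z = {y. poly (r_reduction ord res vpi n (int k) g P) y = 0}"
    and "\<And>y. poly (r_reduction ord res vpi n (int k) g P) y = 0 \<Longrightarrow>
           card {x \<in> Z. t_r ord res vpi n (int k) x = y} = n"
proof -
  note \<pi> = ord_vpi_power_root[OF root \<open>n > 0\<close>]
  have units: "x / \<pi> \<noteq> 0 \<and> ord (x / \<pi>) = 0" if "x \<in> Z" for x
    using slope[OF that] \<pi> by (simp add: ord_divide)
  have t_r_eq: "t_r ord res vpi n (int k) x = res (x / \<pi>) ^ n" if "x \<in> Z" for x
    using t_r_mult_unit[OF root, of "x / \<pi>"] units[OF that] \<pi> by simp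
  have prod_eq: "(\<Prod>x\<in>Z. z - res (x / \<pi>)) = poly (r_reduction ord res vpi n (int k) g P) (z ^ n)" for z
    using prod_res_roots_eq_r_reduction[OF \<open>finite Z\<close> card \<open>n > 0\<close> root coprime _ coeff_ord P]
      units by (simp add: val_integral_of_ord_eq_0)
  have inj: "inj_on (\<lambda>x. res (x / \<pi>)) Z"
    using slope sep \<pi> by (intro inj_on_res_divide) auto
  have "r_reduction ord res vpi n (int k) g P \<noteq> 0"
    using r_reduction_monic(2)[of ord res vpi n "int k" g P] by (metis coeff_0 zero_neq_one)
  note counting = power_image_eq_poly_roots[OF \<open>finite Z\<close> card \<open>n > 0\<close> inj prod_eq this
      eq_imp_le[OF r_reduction_monic(1)]]
  have "t_r ord res vpi n (int k) ` Z = (\<lambda>x. res (x / \<pi>) ^ n) ` Z"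
    by (rule image_cong) (simp_all add: t_r_eq)
  with counting(1) show "t_r ord res vpi n (int k) ` Z = {y. poly (r_reduction ord res vpi n (int k) g P) y = 0}"
    by simp
  have "{x \<in> Z. t_r ord res vpi n (int k) x = y} = {x \<in> Z. res (x / \<pi>) ^ n = y}" for y
    using t_r_eq by auto
  with counting(2) show "\<And>y. poly (r_reduction ord res vpi n (int k) g P) y = 0 \<Longrightarrow>
      card {x \<in> Z. t_r ord res vpi n (int k) x = y} = n"
    by simp
qed

end

lemma residue_valuation_of_p_adic_closure_data:
  assumes "p_adic_closure_data Fs ord res vpi p q"
  shows "residue_valuation ord res vpi"
  using assms unfolding p_adic_closure_data_def residue_valuation_def
  by (elim conjE) (intro conjI; blast)

theorem lemma3p4:
  fixes Fs :: "'a::field_char_0 set" and ord :: "'a \<Rightarrow> rat" and res :: "'a \<Rightarrow> 'b::field"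
    and vpi :: 'a and p q :: nat
    and r :: rat and N :: nat and L :: int and g n :: nat and l :: int
    and P :: "'a poly"
  assumes hsetting: "p_adic_closure_data Fs ord res vpi p q"
    and r_nonneg: "r \<ge> 0" and N_pos: "N \<ge> 1" and r_eq: "r = of_int L / of_nat N"
    and g_def: "int g = gcd L (int N)" and l_def: "l * int g = L" and n_def: "n * g = N"
    and p_gt: "p > n"
    and P_coeffs: "\<forall>i. coeff P i \<in> Fs"
    and P_monic: "degree P = N" "lead_coeff P = 1"
    and P_slope: "\<forall>x. poly P x = 0 \<longrightarrow> x \<noteq> 0 \<and> ord x = r"
    and P_distinct: "card {x. poly P x = 0} = N"
    and P_sep: "\<forall>x y. poly P x = 0 \<longrightarrow> poly P y = 0 \<longrightarrow> x \<noteq> y \<longrightarrow> ord (x - y) = r"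
  shows "(\<forall>x. poly P x = 0 \<longrightarrow> poly (r_reduction ord res vpi n l g P) (t_r ord res vpi n l x) = 0)
       \<and> t_r ord res vpi n l ` {x. poly P x = 0} = {y. poly (r_reduction ord res vpi n l g P) y = 0}
       \<and> (\<forall>y. poly (r_reduction ord res vpi n l g P) y = 0 \<longrightarrow>
              card {x. poly P x = 0 \<and> t_r ord res vpi n l x = y} = n)"
proof -
  interpret residue_valuation ord res vpi
    using hsetting by (rule residue_valuation_of_p_adic_closure_data)
  have alg_closed: "\<forall>Q::'a poly. 0 < degree Q \<longrightarrow> (\<exists>x. poly Q x = 0)"
    and ord_Fs: "\<And>x. x \<in> Fs \<Longrightarrow> x \<noteq> 0 \<Longrightarrow> ord x \<in> \<int>"
    using hsetting unfolding p_adic_closure_data_def by blast+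
  define Z where "Z = {x. poly P x = 0}"
  have "finite Z" and card_Z: "card Z = n * g"
    using P_distinct N_pos n_def by (auto simp: Z_def intro: card_ge_0_finite)
  have "n > 0"
    using N_pos n_def by (cases n) auto
  have P_prod: "P = (\<Prod>x\<in>Z. [:- x, 1:])"
    using \<open>finite Z\<close> P_monic P_distinct by (intro monic_poly_eq_prod_roots) (auto simp: Z_def)
  obtain k where l: "l = int k" and coprime: "coprime (int k) (int n)" and r: "r = of_nat k / of_nat n"
    using reduced_fraction[OF g_def l_def n_def N_pos] r_eq r_nonneg by metis
  obtain \<pi> where root: "\<pi> ^ n = vpi ^ k"
    using alg_closed_nth_root[OF alg_closed \<open>n > 0\<close>] by metis
  have "t_r ord res vpi n l ` Z = {y. poly (r_reduction ord res vpi n l g P) y = 0}"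
    and "\<And>y. poly (r_reduction ord res vpi n l g P) y = 0 \<Longrightarrow> card {x \<in> Z. t_r ord res vpi n l x = y} = n"
    unfolding l using P_coeffs ord_Fs P_slope P_sep r
    by (intro t_r_maps_roots_onto_r_reduction_roots[OF \<open>finite Z\<close> card_Z \<open>n > 0\<close> coprime root P_prod];
        auto simp: Z_def)+
  then show ?thesis
    by (auto simp: Z_def)
qed

end
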